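(* Let $p>1$, $s\ge r\ge2$, let $Q$ be an $s$-vertex $r$-graph and let $\mathcal P$ be a hereditary property of $r$-graphs with $\lambda^{(p)}(Q,\mathcal P)>0$. Writing $\lambda_n^{(p)}=\lambda^{(p)}(Q,\mathcal P_n)$, there exist infinitely many $n$ such that $$\frac{\lambda_{n-1}^{(p)}(n-1)^{s/p}}{(n-1)_s}-\frac{\lambda_n^{(p)}n^{s/p}}{(n)_s}<\frac{1}{n\log n}\cdot\frac{\lambda_n^{(p)}n^{s/p}}{(n)_s},$$ where $(m)_s=m(m-1)\cdots(m-s+1)$.
   Context: An $r$-graph ($r\ge 2$) is a finite hypergraph all of whose edges have exactly $r$ vertices. For $I\subseteq V(H)$, $H[I]$ denotes the induced subhypergraph on $I$. For an $s$-vertex $r$-graph $Q$ and an $r$-graph $H$, $\mathcal N(Q,H)$ is the number of (not necessarily induced) subgraphs of $H$ isomorphic to $Q$. For an $n$-vertex $r$-graph $H$ with vertex set $[n]$ and $\mathbf x\in\mathbb R^n$, $P_{Q,H}(\mathbf x)=s!\sum_{\{i_1,\dots,i_s\}\in\binom{[n]}{s}}\mathcal N(Q,H[\{i_1,\dots,i_s\}])\,x_{i_1}\cdots x_{i_s}$, and for $p\ge1$, $\lambda^{(p)}(Q,H)=\max_{\|\mathbf x\|_p=1}P_{Q,H}(\mathbf x)$. A hereditary property $\mathcal P$ of $r$-graphs is a family of $r$-graphs closed under isomorphism and under taking induced subgraphs; as a standing assumption, whenever $H\in\mathcal P$, the disjoint union of $H$ with an isolated vertex is also in $\mathcal P$.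 $\mathcal P_n$ is the set of members of $\mathcal P$ with $n$ vertices; $\lambda^{(p)}(Q,\mathcal P_n)=\max\{\lambda^{(p)}(Q,H):H\in\mathcal P_n\}$ and $\lambda^{(p)}(Q,\mathcal P)=\lim_{n\to\infty}\lambda^{(p)}(Q,\mathcal P_n)n^{s/p-s}$ (this limit exists). Here $\log$ is the natural logarithm. *)

theory Defs
  imports Complex_Main
begin

definition is_rgraph :: "nat \<Rightarrow> nat \<Rightarrow> nat set set \<Rightarrow> bool" where
  "is_rgraph r n E \<longleftrightarrow> (\<forall>e\<in>E. e \<subseteq> {0..<n} \<and> card e = r)"

definition induced_edges :: "nat set set \<Rightarrow> nat set \<Rightarrow> nat set set" where
  "induced_edges E I = {e \<in> E. e \<subseteq> I}"

text \<open>Hereditary: every member is an r-graph; closed under isomorphism and induced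
  subgraphs (combined: pulling back the induced subgraph on an m-subset of [n]
  along an injection [m] -> [n]); and closed under adding an isolated vertex.\<close>
definition hereditary :: "nat \<Rightarrow> (nat \<times> nat set set) set \<Rightarrow> bool" where
  "hereditary r P \<longleftrightarrow>
     (\<forall>n E. (n, E) \<in> P \<longrightarrow> is_rgraph r n E) \<and>
     (\<forall>n E m f. (n, E) \<in> P \<and> inj_on f {0..<m} \<and> f ` {0..<m} \<subseteq> {0..<n} \<longrightarrow>
        (m, {e. e \<subseteq> {0..<m} \<and> f ` e \<in> E}) \<in> P) \<and>
     (\<forall>n E. (n, E) \<in> P \<longrightarrow> (Suc n, E) \<in> P)"

text \<open>N(Q, H[I]) for |I| = s: number of subgraphs of H[I] with vertex set I isomorphic
  to Q (Q an s-vertex r-graph on [s] with edge set EQ).\<close>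
definition copies :: "nat \<Rightarrow> nat set set \<Rightarrow> nat set set \<Rightarrow> nat set \<Rightarrow> nat" where
  "copies s EQ E I = card {F. F \<subseteq> induced_edges E I \<and>
      (\<exists>f. bij_betw f {0..<s} I \<and> F = (\<lambda>e. f ` e) ` EQ)}"

definition PQH :: "nat \<Rightarrow> nat set set \<Rightarrow> nat \<Rightarrow> nat set set \<Rightarrow> (nat \<Rightarrow> real) \<Rightarrow> real" where
  "PQH s EQ n E x = fact s * (\<Sum>I \<in> {I. I \<subseteq> {0..<n} \<and> card I = s}.
       real (copies s EQ E I) * (\<Prod>i\<in>I. x i))"

definition lamH :: "real \<Rightarrow> nat \<Rightarrow> nat set set \<Rightarrow> nat \<Rightarrow> nat set set \<Rightarrow> real" where
  "lamH p s EQ n E = Sup {PQH s EQ n E x | x. (\<Sum>i<n. \<bar>x i\<bar> powr p) = 1}"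

definition lamPn :: "real \<Rightarrow> nat \<Rightarrow> nat set set \<Rightarrow> (nat \<times> nat set set) set \<Rightarrow> nat \<Rightarrow> real" where
  "lamPn p s EQ P n = Sup {lamH p s EQ n E | E. (n, E) \<in> P}"

definition lamP :: "real \<Rightarrow> nat \<Rightarrow> nat set set \<Rightarrow> (nat \<times> nat set set) set \<Rightarrow> real" where
  "lamP p s EQ P = lim (\<lambda>n. lamPn p s EQ P n * real n powr (real s / p - real s))"

definition falling :: "nat \<Rightarrow> nat \<Rightarrow> real" where
  "falling m s = (\<Prod>i<s. real m - real i)"

end

theory Submission
  imports Defs "HOL-Analysis.Analysis"
begin

text \<open>Let \<open>a\<^sub>n = \<lambda>\<^sub>n n\<^bsup>s/p\<^esup> / (n)\<^sub>s\<close>. If the inequality held for only finitely many \<open>n\<close>,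
  then eventually \<open>a\<^sub>n / (n log n) \<le> a\<^sub>n\<^sub>-\<^sub>1 - a\<^sub>n\<close>, so the eventually nonnegative sequence
  \<open>a\<^sub>n\<close> would be eventually nonincreasing, with a limit \<open>L \<ge> 0\<close>. If \<open>L > 0\<close>, telescoping
  would bound the partial sums of the divergent series \<open>\<Sum> 1/(n log n)\<close>. So \<open>a\<^sub>n \<rightarrow> 0\<close>, and
  since \<open>(n)\<^sub>s \<le> n\<^sup>s\<close> also \<open>\<lambda>\<^sub>n n\<^bsup>s/p - s\<^esup> \<rightarrow> 0\<close>: the limit \<open>\<lambda>\<^sup>(\<^sup>p\<^sup>)(Q,P)\<close> would be \<open>0\<close>.\<close>

lemma not_summable_inverse_n_ln_n: "\<not> summable (\<lambda>n::nat. 1 / (real n * ln (real n)))"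
proof
  assume "summable (\<lambda>n::nat. 1 / (real n * ln (real n)))"
  \<comment> \<open>\<open>1/(n ln n)\<close> is \<open>0\<close> at \<open>n = 1\<close>; clamping at \<open>2\<close> gives the monotonicity the condensation test needs\<close>
  define g where "g n = 1 / (real (max n 2) * ln (real (max n 2)))" for n :: nat
  have "\<forall>\<^sub>F n in sequentially. 1 / (real n * ln (real n)) = g n"
    using eventually_ge_at_top[of "2::nat"] by eventually_elim (simp add: g_def max_def)
  with \<open>summable _\<close> have "summable g"
    using summable_cong[of "\<lambda>n. 1 / (real n * ln (real n))" g] by simp
  moreover have "g (Suc m) \<le> g m" for m
  proof -
    have "0 < real (max m 2) * ln (real (max m 2))"
      by (intro mult_pos_pos) auto
    moreover have "real (max m 2) * ln (real (max m 2))
        \<le> real (max (Suc m) 2) * ln (real (max (Suc m) 2))"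
      by (intro mult_mono) auto
    ultimately show ?thesis unfolding g_def by (intro divide_left_mono) auto
  qed
  moreover have "g n \<ge> 0" for n
    unfolding g_def by (intro divide_nonneg_pos mult_pos_pos) auto
  ultimately have "summable (\<lambda>n. 2^n * g (2^n))"
    using condensation_test[of g] by blast
  moreover have "\<forall>\<^sub>F n in sequentially. 2^n * g (2^n) = inverse (real n) / ln 2"
    using eventually_ge_at_top[of "1::nat"]
  proof eventually_elim
    case (elim n)
    then have "max (2^n) 2 = (2::nat)^n"
      using power_increasing[of 1 n "2::nat"] by simp
    then show ?case using elim by (simp add: g_def ln_realpow field_simps)
  qed
  ultimately have "summable (\<lambda>n. inverse (real n) / ln 2)"
    using summable_cong by fastforce
  then show False
    using not_summable_harmonic[where 'a = real] summable_divide_iff by fastforce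
qed

lemma summable_of_weighted_le_decrements:
  fixes c y :: "nat \<Rightarrow> real"
  assumes "L > 0" and "\<And>k. 0 \<le> y k" and "\<And>k. 0 \<le> c k"
    and "\<And>k. L * y k \<le> c k - c (Suc k)"
  shows "summable y"
proof (rule summableI_nonneg_bounded)
  fix K
  have "L * (\<Sum>k<K. y k) = (\<Sum>k<K. L * y k)" by (simp add: sum_distrib_left)
  also have "\<dots> \<le> (\<Sum>k<K. c k - c (Suc k))" by (intro sum_mono assms(4))
  also have "\<dots> = c 0 - c K" by (rule sum_lessThan_telescope')
  also have "\<dots> \<le> c 0" using assms(3) by simp
  finally show "(\<Sum>k<K. y k) \<le> c 0 / L" using \<open>L > 0\<close> by (simp add: field_simps)
qed (use assms(2) in auto)

lemma tendsto_zero_of_decrements_ge_inverse_n_ln_n: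
  fixes a :: "nat \<Rightarrow> real"
  assumes "\<forall>\<^sub>F n in sequentially. 0 \<le> a n"
    and "\<forall>\<^sub>F n in sequentially. 1 / (real n * ln (real n)) * a n \<le> a (n - 1) - a n"
  shows "a \<longlonglongrightarrow> 0"
proof -
  define w where "w n = 1 / (real n * ln (real n))" for n :: nat
  obtain M where M: "M \<ge> 2" and nonneg: "\<And>n. n \<ge> M \<Longrightarrow> 0 \<le> a n"
    and gap: "\<And>n. n \<ge> M \<Longrightarrow> w n * a n \<le> a (n - 1) - a n"
    using eventually_conj[OF eventually_ge_at_top[of 2] eventually_conj[OF assms]]
    unfolding eventually_sequentially w_def by (metis nat_le_linear order.trans)
  have w_pos: "0 < w n" if "n \<ge> 2" for n
    using that unfolding w_def by (intro divide_pos_pos mult_pos_pos) auto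
  define c where "c k = a (k + M)" for k
  have c_nonneg: "0 \<le> c k" for k
    unfolding c_def by (simp add: nonneg)
  have c_step: "w (Suc k + M) * c (Suc k) \<le> c k - c (Suc k)" for k
    using gap[of "Suc k + M"] unfolding c_def by simp
  have "decseq c"
  proof (rule decseq_SucI)
    fix k
    have "0 \<le> w (Suc k + M) * c (Suc k)"
      using w_pos[of "Suc k + M"] M c_nonneg by simp
    with c_step[of k] show "c (Suc k) \<le> c k" by simp
  qed
  then obtain L where "c \<longlonglongrightarrow> L" and L_le: "\<And>k. L \<le> c k"
    using decseq_convergent c_nonneg by blast
  have "L = 0"
  proof (rule ccontr)
    assume "L \<noteq> 0"
    with L_le[of 0] \<open>c \<longlonglongrightarrow> L\<close> c_nonneg have "L > 0"
      using LIMSEQ_le_const by (metis order_le_less)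
    have "L * w (k + Suc M) \<le> c k - c (Suc k)" for k
    proof -
      have "L * w (k + Suc M) \<le> c (Suc k) * w (k + Suc M)"
        using L_le w_pos[of "k + Suc M"] M by (intro mult_right_mono) auto
      with c_step[of k] show ?thesis by (simp add: mult.commute)
    qed
    then have "summable (\<lambda>k. w (k + Suc M))"
      using \<open>L > 0\<close> c_nonneg w_pos M
      by (intro summable_of_weighted_le_decrements[where c = c]) (auto intro: less_imp_le)
    then show False
      using not_summable_inverse_n_ln_n summable_iff_shift unfolding w_def by blast
  qed
  with \<open>c \<longlonglongrightarrow> L\<close> show ?thesis
    unfolding c_def by (simp add: LIMSEQ_offset)
qed

lemma falling_pos: "s \<le> n \<Longrightarrow> 0 < falling n s"
  unfolding falling_def by (intro prod_pos) auto

lemma falling_le_power: "s \<le> n \<Longrightarrow> falling n s \<le> real n ^ s"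
  unfolding falling_def using prod_mono[of "{..<s}" "\<lambda>i. real n - real i" "\<lambda>_. real n"]
  by simp

lemma tendsto_zero_div_power_of_div_falling:
  fixes x :: "nat \<Rightarrow> real"
  assumes "(\<lambda>n. x n / falling n s) \<longlonglongrightarrow> 0"
  shows "(\<lambda>n. x n / real n ^ s) \<longlonglongrightarrow> 0"
proof (rule Lim_null_comparison)
  show "\<forall>\<^sub>F n in sequentially. norm (x n / real n ^ s) \<le> \<bar>x n / falling n s\<bar>"
    using eventually_ge_at_top[of s]
  proof eventually_elim
    case (elim n)
    then have "0 < falling n s" and "falling n s \<le> real n ^ s"
      by (simp_all add: falling_pos falling_le_power)
    moreover from this have "0 < real n ^ s" by linarith
    ultimately have "\<bar>x n\<bar> / real n ^ s \<le> \<bar>x n\<bar> / falling n s"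
      by (intro divide_left_mono mult_pos_pos) simp_all
    with \<open>0 < falling n s\<close> show ?case by simp
  qed
  show "(\<lambda>n. \<bar>x n / falling n s\<bar>) \<longlonglongrightarrow> 0"
    using tendsto_rabs_zero[OF assms] .
qed

lemma PQH_nonneg: "(\<And>i. 0 \<le> x i) \<Longrightarrow> 0 \<le> PQH s Q n E x"
  unfolding PQH_def by (intro mult_nonneg_nonneg sum_nonneg prod_nonneg) auto

lemma bdd_above_PQH_sphere:
  assumes "p > 0"
  shows "bdd_above {PQH s Q n E x | x. (\<Sum>i<n. \<bar>x i\<bar> powr p) = 1}"
proof -
  define B where "B = fact s * (\<Sum>I | I \<subseteq> {0..<n} \<and> card I = s. real (copies s Q E I))"
  have "PQH s Q n E x \<le> B" if x: "(\<Sum>i<n. \<bar>x i\<bar> powr p) = 1" for x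
  proof -
    have "\<bar>x i\<bar> \<le> 1" if "i < n" for i
    proof (rule ccontr)
      assume "\<not> \<bar>x i\<bar> \<le> 1"
      then have "1 < \<bar>x i\<bar> powr p"
        using \<open>p > 0\<close> by (simp add: powr_less_mono2)
      moreover have "\<bar>x i\<bar> powr p \<le> (\<Sum>i<n. \<bar>x i\<bar> powr p)"
        using \<open>i < n\<close> by (intro member_le_sum) auto
      ultimately show False using x by simp
    qed
    then have "(\<Prod>i\<in>I. x i) \<le> 1" if "I \<subseteq> {0..<n}" for I
      using that prod_le_1[of I "\<lambda>i. \<bar>x i\<bar>"] abs_prod[of x I] by force
    then show ?thesis
      unfolding PQH_def B_def
      by (intro mult_left_mono sum_mono) (auto intro: mult_left_le)
  qed
  then show ?thesis unfolding bdd_above_def by blast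
qed

lemma lamH_nonneg:
  assumes "p > 0" and "n \<ge> 1"
  shows "0 \<le> lamH p s Q n E"
proof -
  define x where "x i = (if i = 0 then 1 else 0 :: real)" for i :: nat
  have "(\<Sum>i<n. \<bar>x i\<bar> powr p) = (\<Sum>i<n. if i = 0 then 1 else 0)"
    by (intro sum.cong) (auto simp: x_def)
  also have "\<dots> = 1" using \<open>n \<ge> 1\<close> by simp
  finally have "PQH s Q n E x \<in> {PQH s Q n E x | x. (\<Sum>i<n. \<bar>x i\<bar> powr p) = 1}"
    by blast
  moreover have "0 \<le> PQH s Q n E x"
    by (rule PQH_nonneg) (simp add: x_def)
  ultimately show ?thesis
    unfolding lamH_def using bdd_above_PQH_sphere[OF \<open>p > 0\<close>] by (meson cSup_upper2)
qed

lemma finite_hereditary_slice: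
  assumes "hereditary r P"
  shows "finite {E. (n, E) \<in> P}"
proof (rule finite_subset)
  show "{E. (n, E) \<in> P} \<subseteq> Pow (Pow {0..<n})"
    using assms unfolding hereditary_def is_rgraph_def by auto
qed simp

lemma hereditary_add_isolated_vertices:
  assumes "hereditary r P" and "(m, E) \<in> P" and "m \<le> n"
  shows "(n, E) \<in> P"
  using \<open>m \<le> n\<close>
proof (induction n rule: dec_induct)
  case base
  show ?case using assms(2) .
next
  case (step n)
  then show ?case using assms(1) unfolding hereditary_def by blast
qed

lemma lamPn_nonneg:
  assumes "hereditary r P" and "(n, E) \<in> P" and "p > 0" and "n \<ge> 1"
  shows "0 \<le> lamPn p s Q P n"
proof -
  have "{lamH p s Q n E | E. (n, E) \<in> P} = lamH p s Q n ` {E. (n, E) \<in> P}"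
    by blast
  then have "bdd_above {lamH p s Q n E | E. (n, E) \<in> P}"
    using finite_hereditary_slice[OF assms(1)] by simp
  moreover have "lamH p s Q n E \<in> {lamH p s Q n E | E. (n, E) \<in> P}"
    using assms(2) by blast
  ultimately show ?thesis
    unfolding lamPn_def using lamH_nonneg[OF assms(3,4)] by (meson cSup_upper2)
qed

lemma eventually_lamPn_nonneg:
  assumes "hereditary r P" and "P \<noteq> {}" and "p > 0"
  shows "\<forall>\<^sub>F n in sequentially. 0 \<le> lamPn p s Q P n"
proof -
  obtain m E where "(m, E) \<in> P" using \<open>P \<noteq> {}\<close> by auto
  then have "(n, E) \<in> P" if "n \<ge> m" for n
    using hereditary_add_isolated_vertices[OF assms(1)] that by blast
  then show ?thesis
    unfolding eventually_sequentially
    using lamPn_nonneg[OF assms(1) _ \<open>p > 0\<close>] by (intro exI[of _ "max m 1"]) fastforce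
qed

text \<open>For the empty property \<open>\<lambda>\<^sup>(\<^sup>p\<^sup>)(Q,\<P>\<^sub>n)\<close> is the junk value \<open>Sup {}\<close>, a constant,
  which the factor \<open>n\<^bsup>s/p - s\<^esup> \<rightarrow> 0\<close> kills.\<close>

lemma lamP_empty:
  assumes "p > 1" and "s > 0"
  shows "lamP p s Q {} = 0"
proof -
  have "real s / p < real s"
    using assms by (simp add: divide_less_eq)
  then have "(\<lambda>n. Sup {} * real n powr (real s / p - real s)) \<longlonglongrightarrow> 0"
    by (intro tendsto_mult_right_zero tendsto_neg_powr filterlim_real_sequentially) simp
  then show ?thesis
    unfolding lamP_def lamPn_def by (simp add: limI)
qed

lemma lamP_eq_0_of_tendsto_0:
  assumes "(\<lambda>n. lamPn p s Q P n * real n powr (real s / p) / falling n s) \<longlonglongrightarrow> 0"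
  shows "lamP p s Q P = 0"
proof -
  have "(\<lambda>n. lamPn p s Q P n * real n powr (real s / p) / real n ^ s) \<longlonglongrightarrow> 0"
    using tendsto_zero_div_power_of_div_falling[OF assms] .
  moreover have "\<forall>\<^sub>F n in sequentially.
      lamPn p s Q P n * real n powr (real s / p) / real n ^ s
        = lamPn p s Q P n * real n powr (real s / p - real s)"
    using eventually_ge_at_top[of "1::nat"]
    by eventually_elim (simp add: powr_diff powr_realpow)
  ultimately have "(\<lambda>n. lamPn p s Q P n * real n powr (real s / p - real s)) \<longlonglongrightarrow> 0"
    by (rule Lim_transform_eventually)
  then show ?thesis
    unfolding lamP_def by (rule limI)
qed

theorem lemma3p4:
  fixes p :: real and r s :: nat and EQ :: "nat set set"
    and P :: "(nat \<times> nat set set) set"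
  assumes "p > 1" and "r \<ge> 2" and "s \<ge> r"
    and "is_rgraph r s EQ"
    and "hereditary r P"
    and "lamP p s EQ P > 0"
  shows "infinite {n::nat.
     lamPn p s EQ P (n - 1) * real (n - 1) powr (real s / p) / falling (n - 1) s
       - lamPn p s EQ P n * real n powr (real s / p) / falling n s
     < 1 / (real n * ln (real n)) * (lamPn p s EQ P n * real n powr (real s / p) / falling n s)}"
proof
  define a where "a n = lamPn p s EQ P n * real n powr (real s / p) / falling n s" for n
  assume "finite {n. a (n - 1) - a n < 1 / (real n * ln (real n)) * a n}"
  then have gap: "\<forall>\<^sub>F n in sequentially. 1 / (real n * ln (real n)) * a n \<le> a (n - 1) - a n"
    unfolding cofinite_eq_sequentially[symmetric] eventually_cofinite by (simp add: not_le)
  have "P \<noteq> {}"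
    using lamP_empty[of p s EQ] assms by auto
  with assms have "\<forall>\<^sub>F n in sequentially. 0 \<le> lamPn p s EQ P n"
    by (intro eventually_lamPn_nonneg) auto
  then have "\<forall>\<^sub>F n in sequentially. 0 \<le> a n"
    using eventually_ge_at_top[of s] by eventually_elim (simp add: a_def falling_pos less_imp_le)
  then have "a \<longlonglongrightarrow> 0"
    using gap by (rule tendsto_zero_of_decrements_ge_inverse_n_ln_n)
  then have "lamP p s EQ P = 0"
    unfolding a_def by (rule lamP_eq_0_of_tendsto_0)
  with assms show False by simp
qed

end
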